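(* Let $n,m,N$ be positive integers with $n>m$ and $\frac{n-1}{n-m}\leq N\leq m$. For almost all $X_0\in\mathbb{C}^{m\times N}$ and $A\in\mathbb{C}^{n\times m}$ (outside a Lebesgue-null set), the $(1+n(N-1))\times mN$ matrix \[ \begin{bmatrix} \operatorname{vec}(X_0)^*\\ D(A^{(1,:)},X_0)\\ \vdots\\ D(A^{(n,:)},X_0) \end{bmatrix} \] has full column rank $mN$.
   Context: $\operatorname{vec}(X)$ is the column vector obtained by stacking the columns of $X$; $^*$ denotes conjugate transpose; $\otimes$ is the Kronecker product. $A^{(k,:)}\in\mathbb{C}^{1\times m}$ is the $k$th row of $A$ and $X_0^{(:,j)}$ the $j$th column of $X_0$. For a row vector $a\in\mathbb{C}^{1\times m}$ and $X_0\in\mathbb{C}^{m\times N}$, $D(a,X_0)\in\mathbb{C}^{(N-1)\times mN}$ is defined as $D(a,X_0)=B\otimes a$, where $B\in\mathbb{C}^{(N-1)\times N}$ has, in its row $i-1$ (for $i=2,\dots,N$), entry $-aX_0^{(:,i)}$ in column $1$, entry $aX_0^{(:,1)}$ in column $i$, and zeros elsewhere. *)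

theory Defs
  imports "HOL-Analysis.Analysis" "Jordan_Normal_Form.DL_Rank"
begin

text \<open>vec(X): stack the columns of X (0-indexed: entry i + m*j is X(i,j)).\<close>
definition vecm :: "complex mat \<Rightarrow> complex vec" where
  "vecm X = vec (dim_row X * dim_col X) (\<lambda>k. X $$ (k mod dim_row X, k div dim_row X))"

definition kron :: "complex mat \<Rightarrow> complex mat \<Rightarrow> complex mat" where
  "kron B C = mat (dim_row B * dim_row C) (dim_col B * dim_col C)
     (\<lambda>(i,j). B $$ (i div dim_row C, j div dim_col C) * C $$ (i mod dim_row C, j mod dim_col C))"

text \<open>The matrix B of the paper (0-indexed): row r (paper row i-1 with i = r+2) has
  entry -a X0^(:,r+1) in column 0 and a X0^(:,0) in column r+1.\<close>
definition Bmat :: "complex vec \<Rightarrow> complex mat \<Rightarrow> complex mat" where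
  "Bmat a X0 = mat (dim_col X0 - 1) (dim_col X0)
     (\<lambda>(r,c). if c = 0 then - (a \<bullet> col X0 (r+1))
              else if c = r + 1 then a \<bullet> col X0 0 else 0)"

definition Dmat :: "complex vec \<Rightarrow> complex mat \<Rightarrow> complex mat" where
  "Dmat a X0 = kron (Bmat a X0) (mat_of_row a)"

definition stacked :: "complex mat \<Rightarrow> complex mat \<Rightarrow> complex mat" where
  "stacked A X0 = mat (1 + dim_row A * (dim_col X0 - 1)) (dim_row X0 * dim_col X0)
     (\<lambda>(i,j). if i = 0 then cnj (vecm X0 $ j)
              else Dmat (row A ((i - 1) div (dim_col X0 - 1))) X0
                     $$ ((i - 1) mod (dim_col X0 - 1), j))"

text \<open>Parameter space: X0 entries indexed by Inl (i,j), A entries by Inr (k,l).\<close>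
definition param_idx :: "nat \<Rightarrow> nat \<Rightarrow> nat \<Rightarrow> ((nat \<times> nat) + (nat \<times> nat)) set" where
  "param_idx n m N = Inl ` ({0..<m} \<times> {0..<N}) \<union> Inr ` ({0..<n} \<times> {0..<m})"

definition X0_of :: "nat \<Rightarrow> nat \<Rightarrow> ((nat \<times> nat) + (nat \<times> nat) \<Rightarrow> complex) \<Rightarrow> complex mat" where
  "X0_of m N z = mat m N (\<lambda>(i,j). z (Inl (i,j)))"

definition A_of :: "nat \<Rightarrow> nat \<Rightarrow> ((nat \<times> nat) + (nat \<times> nat) \<Rightarrow> complex) \<Rightarrow> complex mat" where
  "A_of n m z = mat n m (\<lambda>(i,j). z (Inr (i,j)))"

end

theory Submission
  imports Defs
begin

text \<open>Apart from the conjugated first row \<open>vec(X\<^sub>0)\<^sup>*\<close>, the entries of the matrix are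
  polynomials in the entries of \<open>(X\<^sub>0, A)\<close>; replacing that row by \<open>e\<^sub>0\<^sup>T\<close> gives a matrix \<open>P\<close>
  with polynomial entries.  Every block \<open>D(a, X\<^sub>0)\<close> annihilates \<open>vec(X\<^sub>0)\<close>, so if \<open>v\<close> is in the
  kernel of the original matrix then \<open>v\<^sub>0 vec(X\<^sub>0) - (X\<^sub>0)\<^sub>1\<^sub>1 v\<close> is in the kernel of \<open>P\<close>; hence
  when \<open>P\<close> is injective and \<open>(X\<^sub>0)\<^sub>1\<^sub>1 \<noteq> 0\<close>, \<open>v\<close> is a multiple of \<open>vec(X\<^sub>0)\<close> and the first row
  forces \<open>v = 0\<close>.  Injectivity of \<open>P\<close> follows from \<open>det (K P) \<noteq> 0\<close>, where \<open>K = P\<^sub>w\<^sup>*\<close> is the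
  adjoint of \<open>P\<close> at an explicit witness \<open>(X\<^sub>w, A\<^sub>w)\<close> at which \<open>P\<close> is injective.  This
  determinant is a polynomial that does not vanish at the witness, so (Fubini, one
  coordinate at a time) its zero set is a null set.\<close>

section \<open>Zero sets of polynomial functions are null\<close>

inductive polyfun :: "(('i \<Rightarrow> 'a::comm_ring_1) \<Rightarrow> 'a) \<Rightarrow> bool" where
  polyfun_const: "polyfun (\<lambda>z. c)"
| polyfun_var: "polyfun (\<lambda>z. z i)"
| polyfun_add: "polyfun f \<Longrightarrow> polyfun g \<Longrightarrow> polyfun (\<lambda>z. f z + g z)"
| polyfun_mult: "polyfun f \<Longrightarrow> polyfun g \<Longrightarrow> polyfun (\<lambda>z. f z * g z)"

lemma polyfun_sum:
  "finite K \<Longrightarrow> (\<And>k. k \<in> K \<Longrightarrow> polyfun (f k)) \<Longrightarrow> polyfun (\<lambda>z. \<Sum>k\<in>K. f k z)"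
  by (induction K rule: finite_induct) (simp_all add: polyfun_const polyfun_add)

lemma polyfun_prod:
  "finite K \<Longrightarrow> (\<And>k. k \<in> K \<Longrightarrow> polyfun (f k)) \<Longrightarrow> polyfun (\<lambda>z. \<Prod>k\<in>K. f k z)"
  by (induction K rule: finite_induct) (simp_all add: polyfun_const polyfun_mult)

lemma polyfun_uminus: "polyfun f \<Longrightarrow> polyfun (\<lambda>z. - f z)"
  using polyfun_mult[OF polyfun_const[of "-1"], of f] by simp

lemma polyfun_if: "polyfun f \<Longrightarrow> polyfun g \<Longrightarrow> polyfun (\<lambda>z. if b then f z else g z)"
  by (cases b) simp_all

lemma polyfun_det:
  assumes "\<And>z. G z \<in> carrier_mat d d"
    and "\<And>i j. i < d \<Longrightarrow> j < d \<Longrightarrow> polyfun (\<lambda>z. G z $$ (i,j))"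
  shows "polyfun (\<lambda>z. det (G z))"
proof -
  let ?P = "{p. p permutes {0..<d}}"
  have "det (G z) = (\<Sum>p\<in>?P. of_int (sign p) * (\<Prod>i\<in>{0..<d}. G z $$ (i, p i)))" for z
    using assms(1)[of z] unfolding det_def by auto
  moreover have "polyfun (\<lambda>z. \<Sum>p\<in>?P. of_int (sign p) * (\<Prod>i\<in>{0..<d}. G z $$ (i, p i)))"
  proof (rule polyfun_sum)
    fix p assume "p \<in> ?P"
    then have "p i < d" if "i < d" for i
      using that permutes_in_image[of p "{0..<d}" i] by simp
    then show "polyfun (\<lambda>z. of_int (sign p) * (\<Prod>i\<in>{0..<d}. G z $$ (i, p i)))"
      by (intro polyfun_mult[OF polyfun_const] polyfun_prod assms(2)) auto
  qed (simp add: finite_permutations)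
  ultimately show ?thesis by simp
qed

lemma polyfun_as_poly_in_coordinate:
  assumes "polyfun f"
  shows "\<exists>P. (\<forall>z w. f (z(i:=w)) = poly (P z) w) \<and> (\<forall>k. polyfun (\<lambda>z. coeff (P z) k))"
  using assms
proof induction
  case (polyfun_const c)
  show ?case by (rule exI[of _ "\<lambda>z. [:c:]"]) (auto intro: polyfun.polyfun_const)
next
  case (polyfun_var j)
  show ?case
  proof (cases "j = i")
    case True
    show ?thesis by (rule exI[of _ "\<lambda>z. [:0,1:]"]) (auto simp: True intro: polyfun.polyfun_const)
  next
    case False
    have "polyfun (\<lambda>z. coeff [:z j:] k)" for k
      by (cases k) (simp_all add: polyfun.polyfun_var polyfun.polyfun_const)
    then show ?thesis using False by (intro exI[of _ "\<lambda>z. [:z j:]"]) auto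
  qed
next
  case (polyfun_add f g)
  then obtain P Q where "\<forall>z w. f (z(i:=w)) = poly (P z) w" "\<forall>k. polyfun (\<lambda>z. coeff (P z) k)"
      "\<forall>z w. g (z(i:=w)) = poly (Q z) w" "\<forall>k. polyfun (\<lambda>z. coeff (Q z) k)" by blast
  then show ?case
    by (intro exI[of _ "\<lambda>z. P z + Q z"]) (simp add: polyfun.polyfun_add del: fun_upd_apply)
next
  case (polyfun_mult f g)
  then obtain P Q where "\<forall>z w. f (z(i:=w)) = poly (P z) w" and P: "\<forall>k. polyfun (\<lambda>z. coeff (P z) k)"
    and "\<forall>z w. g (z(i:=w)) = poly (Q z) w" and Q: "\<forall>k. polyfun (\<lambda>z. coeff (Q z) k)" by blast
  moreover have "polyfun (\<lambda>z. coeff (P z * Q z) k)" for k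
    unfolding coeff_mult using P Q by (intro polyfun_sum polyfun.polyfun_mult) auto
  ultimately show ?case by (intro exI[of _ "\<lambda>z. P z * Q z"]) (simp del: fun_upd_apply)
qed

lemma polyfun_measurable:
  assumes "polyfun f"
  shows "f \<in> borel_measurable (PiM I (\<lambda>_. lborel :: complex measure))"
  using assms
proof induction
  case (polyfun_const c)
  then show ?case by simp
next
  case (polyfun_var i)
  show ?case
  proof (cases "i \<in> I")
    case True
    then show ?thesis by measurable
  next
    case False
    have "(\<lambda>z. z i) \<in> borel_measurable (PiM I (\<lambda>_. lborel :: complex measure)) \<longleftrightarrow>
          (\<lambda>z. undefined :: complex) \<in> borel_measurable (PiM I (\<lambda>_. lborel :: complex measure))"
    proof (rule measurable_cong)
      fix w assume "w \<in> space (PiM I (\<lambda>_. lborel :: complex measure))"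
      then have "w \<in> PiE I (\<lambda>_. space (lborel :: complex measure))" by (simp add: space_PiM)
      then show "w i = undefined" using False by (rule PiE_arb)
    qed
    then show ?thesis by simp
  qed
next
  case (polyfun_add f g)
  then show ?case by (auto intro!: borel_measurable_add)
next
  case (polyfun_mult f g)
  then show ?case by (auto intro!: borel_measurable_times)
qed

lemma emeasure_PiM_insert_null:
  assumes "finite J" "i \<notin> J" "sigma_finite_measure M"
    and S: "S \<in> sets (PiM (insert i J) (\<lambda>_. M))"
    and null: "AE x in PiM J (\<lambda>_. M). {y \<in> space M. x(i:=y) \<in> S} \<in> null_sets M"
  shows "emeasure (PiM (insert i J) (\<lambda>_. M)) S = 0"
proof -
  interpret product_sigma_finite "\<lambda>_. M"
    using assms(3) by (simp add: product_sigma_finite_def)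
  have "emeasure (PiM (insert i J) (\<lambda>_. M)) S = (\<integral>\<^sup>+z. indicator S z \<partial>PiM (insert i J) (\<lambda>_. M))"
    using S by simp
  also have "\<dots> = (\<integral>\<^sup>+x. \<integral>\<^sup>+y. indicator S (x(i:=y)) \<partial>M \<partial>PiM J (\<lambda>_. M))"
    using S by (intro product_nn_integral_insert assms(1,2)) simp
  also have "\<dots> = (\<integral>\<^sup>+x. 0 \<partial>PiM J (\<lambda>_. M))"
  proof (rule nn_integral_cong_AE)
    show "AE x in PiM J (\<lambda>_. M). (\<integral>\<^sup>+y. indicator S (x(i:=y)) \<partial>M) = 0"
      using null
    proof eventually_elim
      case (elim x)
      have "(\<integral>\<^sup>+y. indicator S (x(i:=y)) \<partial>M) = (\<integral>\<^sup>+y. indicator {y \<in> space M. x(i:=y) \<in> S} y \<partial>M)"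
        by (intro nn_integral_cong) (simp add: indicator_def)
      also have "\<dots> = 0" using null_setsD1[OF elim] null_setsD2[OF elim] by simp
      finally show ?case .
    qed
  qed
  finally show ?thesis by simp
qed

lemma AE_polyfun_nonzero:
  fixes f :: "('i \<Rightarrow> complex) \<Rightarrow> complex"
  assumes "finite I" "polyfun f" "\<And>z z'. (\<And>j. j \<in> I \<Longrightarrow> z j = z' j) \<Longrightarrow> f z = f z'" "f w \<noteq> 0"
  shows "AE z in PiM I (\<lambda>_. lborel). f z \<noteq> 0"
  using assms
proof (induction I arbitrary: f w rule: finite_induct)
  case empty
  have "f z = f w" for z by (rule empty.prems(2)) simp
  then show ?case using empty.prems(3) by (intro AE_I2) metis
next
  case (insert i J f w)
  obtain P where P_eval: "\<And>z w. f (z(i:=w)) = poly (P z) w"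
    and P_coeff: "\<And>k. polyfun (\<lambda>z. coeff (P z) k)"
    using polyfun_as_poly_in_coordinate[OF insert.prems(1), of i] by blast
  have P_local: "P z = P z'" if "\<And>j. j \<in> J \<Longrightarrow> z j = z' j" for z z'
  proof -
    have "f (z(i:=w)) = f (z'(i:=w))" for w
      by (rule insert.prems(2)) (auto simp: that)
    then show ?thesis using P_eval by (auto simp: poly_eq_poly_eq_iff[symmetric] fun_eq_iff)
  qed
  define k where "k = degree (P w)"
  have "P w \<noteq> 0" using P_eval[of w "w i"] insert.prems(3) by auto
  then have "coeff (P w) k \<noteq> 0" unfolding k_def by simp
  moreover have "coeff (P z) k = coeff (P z') k" if "\<And>j. j \<in> J \<Longrightarrow> z j = z' j" for z z'
    using P_local[OF that] by simp
  ultimately have "AE x in PiM J (\<lambda>_. lborel). coeff (P x) k \<noteq> 0"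
    using insert.IH[OF P_coeff] by blast
  then have AE_P: "AE x in PiM J (\<lambda>_. lborel). P x \<noteq> 0"
    by (rule eventually_mono) auto
  let ?M = "PiM (insert i J) (\<lambda>_. lborel :: complex measure)"
  let ?S = "{z \<in> space ?M. f z = 0}"
  have S: "?S \<in> sets ?M"
  proof -
    have "?S = f -` {0} \<inter> space ?M" by auto
    also have "\<dots> \<in> sets ?M" by (rule measurable_sets[OF polyfun_measurable[OF insert.prems(1)]]) simp
    finally show ?thesis .
  qed
  have "emeasure ?M ?S = 0"
  proof (rule emeasure_PiM_insert_null[OF insert.hyps lborel.sigma_finite_measure_axioms S])
    show "AE x in PiM J (\<lambda>_. lborel). {y \<in> space lborel. x(i:=y) \<in> ?S} \<in> null_sets lborel"
      using AE_P
    proof (rule eventually_mono)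
      fix x assume "P x \<noteq> 0"
      then have "finite {y. poly (P x) y = 0}" by (rule poly_roots_finite)
      moreover have "{y \<in> space lborel. x(i:=y) \<in> ?S} \<subseteq> {y. poly (P x) y = 0}"
        by (auto simp: P_eval)
      ultimately have "countable {y \<in> space lborel. x(i:=y) \<in> ?S}"
        by (meson countable_finite finite_subset)
      then show "{y \<in> space lborel. x(i:=y) \<in> ?S} \<in> null_sets lborel"
        by (rule countable_imp_null_set_lborel)
    qed
  qed
  moreover have "{z \<in> space ?M. \<not> f z \<noteq> 0} = ?S" by simp
  ultimately show ?case using AE_iff_measurable[OF S] by simp
qed

section \<open>Matrices with trivial kernel\<close>

definition trivial_kernel :: "'a::comm_ring_1 mat \<Rightarrow> bool" where
  "trivial_kernel A \<longleftrightarrow>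
     (\<forall>v \<in> carrier_vec (dim_col A). A *\<^sub>v v = 0\<^sub>v (dim_row A) \<longrightarrow> v = 0\<^sub>v (dim_col A))"

lemma trivial_kernelI:
  assumes "A \<in> carrier_mat nr nc"
    and "\<And>v. v \<in> carrier_vec nc \<Longrightarrow> A *\<^sub>v v = 0\<^sub>v nr \<Longrightarrow> v = 0\<^sub>v nc"
  shows "trivial_kernel A"
  using assms unfolding trivial_kernel_def by auto

lemma trivial_kernelD:
  assumes "trivial_kernel A" "A \<in> carrier_mat nr nc" "v \<in> carrier_vec nc" "A *\<^sub>v v = 0\<^sub>v nr"
  shows "v = 0\<^sub>v nc"
  using assms unfolding trivial_kernel_def by auto

lemma mult_unit_vec_eq_col:
  fixes A :: "'a::semiring_1 mat"
  assumes "A \<in> carrier_mat nr nc" "i < nc"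
  shows "A *\<^sub>v unit_vec nc i = col A i"
proof (rule eq_vecI)
  fix k assume "k < dim_vec (col A i)"
  then have "k < nr" using assms(1) by simp
  then show "(A *\<^sub>v unit_vec nc i) $ k = col A i $ k"
    using assms by (simp add: scalar_prod_right_unit)
qed (use assms in simp)

lemma distinct_cols_if_trivial_kernel:
  fixes A :: "'a::comm_ring_1 mat"
  assumes A: "A \<in> carrier_mat nr nc" and ker: "trivial_kernel A"
  shows "distinct (cols A)"
proof (rule ccontr)
  assume "\<not> distinct (cols A)"
  then obtain i j where ij: "i < nc" "j < nc" "i \<noteq> j" "col A i = col A j"
    using A by (auto simp: distinct_conv_nth)
  let ?v = "unit_vec nc i - unit_vec nc j :: 'a vec"
  have "A *\<^sub>v ?v = col A i - col A j"
    using A ij by (simp add: mult_minus_distrib_mat_vec mult_unit_vec_eq_col)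
  also have "\<dots> = 0\<^sub>v nr" using A ij by (simp add: minus_cancel_vec)
  finally have "?v = 0\<^sub>v nc" using trivial_kernelD[OF ker A] by simp
  then have "?v $ i = 0" using ij by simp
  then show False using ij by simp
qed

lemma rank_eq_dim_col_if_trivial_kernel:
  fixes A :: "'a::field mat"
  assumes A: "A \<in> carrier_mat nr nc" and ker: "trivial_kernel A"
  shows "vec_space.rank nr A = nc"
proof -
  interpret vec_space "TYPE('a)" nr .
  have dist: "distinct (cols A)" by (rule distinct_cols_if_trivial_kernel[OF A ker])
  have "lin_indpt (set (cols A))"
  proof
    assume "lin_dep (set (cols A))"
    then obtain v where "v \<in> carrier_vec nc" "v \<noteq> 0\<^sub>v nc" "A *\<^sub>v v = 0\<^sub>v nr"
      using lin_depE[OF A _ dist] by blast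
    then show False using trivial_kernelD[OF ker A] by blast
  qed
  then show ?thesis using lin_indpt_full_rank[OF A dist] by simp
qed

lemma trivial_kernel_if_det_mult_nonzero:
  fixes A :: "'a::idom mat"
  assumes K: "K \<in> carrier_mat nc nr" and A: "A \<in> carrier_mat nr nc" and det: "det (K * A) \<noteq> 0"
  shows "trivial_kernel A"
proof (rule trivial_kernelI[OF A])
  fix v assume v: "v \<in> carrier_vec nc" and Av: "A *\<^sub>v v = 0\<^sub>v nr"
  have "(K * A) *\<^sub>v v = K *\<^sub>v (A *\<^sub>v v)" using K A v by simp
  also have "\<dots> = 0\<^sub>v nc" using K unfolding Av by (intro eq_vecI) auto
  finally show "v = 0\<^sub>v nc"
    using det det_0_iff_vec_prod_zero[OF mult_carrier_mat[OF K A]] v by blast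
qed

lemma conjugate_mult_mat_vec:
  fixes A :: "'a::{conjugatable_ring, comm_ring} mat"
  assumes "A \<in> carrier_mat nr nc" "v \<in> carrier_vec nc"
  shows "map_mat conjugate A *\<^sub>v conjugate v = conjugate (A *\<^sub>v v)"
proof (rule eq_vecI)
  fix i assume "i < dim_vec (conjugate (A *\<^sub>v v))"
  then have i: "i < nr" using assms by simp
  have "row (map_mat conjugate A) i = conjugate (row A i)"
    using assms i by (intro eq_vecI) auto
  then show "(map_mat conjugate A *\<^sub>v conjugate v) $ i = conjugate (A *\<^sub>v v) $ i"
    using assms i by (simp add: conjugate_sprod_vec[of _ nc])
qed (use assms in simp)

text \<open>The Gram matrix \<open>A\<^sup>* A\<close> is nonsingular as soon as \<open>A\<close> is injective, because
  \<open>v\<^sup>* (A\<^sup>* A) v = \<parallel>A v\<parallel>\<^sup>2\<close>.\<close>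
lemma det_gram_nonzero_if_trivial_kernel:
  fixes A :: "'a::conjugatable_ordered_field mat"
  assumes A: "A \<in> carrier_mat nr nc" and ker: "trivial_kernel A"
  shows "det (transpose_mat (map_mat conjugate A) * A) \<noteq> 0"
proof
  let ?H = "transpose_mat (map_mat conjugate A)"
  have H: "?H \<in> carrier_mat nc nr" using A by simp
  assume "det (?H * A) = 0"
  then obtain v where v: "v \<in> carrier_vec nc" "v \<noteq> 0\<^sub>v nc" "(?H * A) *\<^sub>v v = 0\<^sub>v nc"
    using det_0_iff_vec_prod_zero[OF mult_carrier_mat[OF H A]] by blast
  define u where "u = A *\<^sub>v v"
  have u: "u \<in> carrier_vec nr" unfolding u_def using A v(1) by simp
  have "?H *\<^sub>v u = 0\<^sub>v nc" using v A H unfolding u_def by simp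
  then have "0 = (?H *\<^sub>v u) \<bullet> conjugate v" using v(1) by simp
  also have "\<dots> = u \<bullet> (map_mat conjugate A *\<^sub>v conjugate v)"
    using A u v(1) by (intro transpose_vec_mult_scalar) auto
  also have "\<dots> = u \<bullet>c u"
    using A v(1) by (simp add: conjugate_mult_mat_vec u_def)
  finally have "u = 0\<^sub>v nr" using u by simp
  then show False using trivial_kernelD[OF ker A v(1)] v(2) u_def by simp
qed

section \<open>Functions constant on windows\<close>

lemma inj_on_mod_interval:
  fixes N lo :: nat
  shows "inj_on (\<lambda>t. t mod N) {t. lo \<le> t \<and> t < lo + N}"
proof (rule inj_onI)
  have key: "a = b" if "a mod N = b mod N" "a \<le> b" "lo \<le> a" "b < lo + N" for a b
  proof -
    have "N dvd b - a" using that(1,2) mod_eq_dvd_iff_nat[of a b N] by simp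
    moreover have "b - a < N" using that(2-4) by linarith
    ultimately show ?thesis using that(2) nat_dvd_not_less[of "b - a" N] by force
  qed
  fix a b assume "a \<in> {t. lo \<le> t \<and> t < lo + N}" "b \<in> {t. lo \<le> t \<and> t < lo + N}"
    "a mod N = b mod N"
  then show "a = b" using key[of a b] key[of b a] by (cases "a \<le> b") auto
qed

lemma sum_mod_eq_transversal:
  fixes f :: "nat \<Rightarrow> 'a::comm_monoid_add"
  assumes "finite S" "inj_on (\<lambda>t. t mod N) S" "t \<in> S"
  shows "(\<Sum>u\<in>S. if u mod N = t mod N then f u else 0) = f t"
proof -
  have "{u \<in> S. u mod N = t mod N} = {t}" using assms(2,3) by (auto dest: inj_onD)
  then show ?thesis using sum.inter_filter[OF assms(1), of f "\<lambda>u. u mod N = t mod N"] by simp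
qed

text \<open>These are the kernel equations of a row of \<open>A\<close> that is the indicator of \<open>S\<close>, when
  \<open>X\<^sub>t\<^sub>c = [t mod N = c]\<close> for \<open>t \<in> S\<close> and \<open>c > 0\<close>.\<close>
lemma eq_on_residue_transversal:
  fixes d :: "nat \<Rightarrow> 'a::field_char_0"
  assumes S: "finite S" "inj_on (\<lambda>t. t mod N) S" and "0 < N"
    and eq: "\<And>c. 0 < c \<Longrightarrow> c < N \<Longrightarrow>
      of_nat (card S) * (\<Sum>t\<in>S. if t mod N = c then d t else 0)
        = (\<Sum>t\<in>S. if t mod N = c then 1 else 0) * (\<Sum>t\<in>S. d t)"
    and "t \<in> S" "t' \<in> S"
  shows "d t = d t'"
proof -
  define \<mu> where "\<mu> = (\<Sum>t\<in>S. d t) / of_nat (card S)"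
  have card: "of_nat (card S) \<noteq> (0::'a)" using S \<open>t \<in> S\<close> by auto
  have nonzero_residue: "d u = \<mu>" if u: "u \<in> S" "u mod N \<noteq> 0" for u
  proof -
    have "of_nat (card S) * d u = (\<Sum>t\<in>S. d t)"
      using eq[of "u mod N"] u \<open>0 < N\<close> sum_mod_eq_transversal[OF S u(1), of d]
        sum_mod_eq_transversal[OF S u(1), of "\<lambda>_. 1 :: 'a"] by simp
    then show ?thesis using card unfolding \<mu>_def by (simp add: field_simps)
  qed
  have "d u = \<mu>" if u: "u \<in> S" for u
  proof (cases "u mod N = 0")
    case True
    have others: "d u' = \<mu>" if "u' \<in> S - {u}" for u'
    proof (rule nonzero_residue)
      show "u' mod N \<noteq> 0"
        using that u True inj_onD[OF S(2), of u' u] by auto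
    qed (use that in simp)
    have "(\<Sum>t\<in>S. d t) = d u + (\<Sum>t\<in>S - {u}. d t)" using S u by (simp add: sum.remove)
    also have "(\<Sum>t\<in>S - {u}. d t) = of_nat (card S - 1) * \<mu>" using others S u by simp
    finally have "of_nat (card S) * \<mu> = d u + of_nat (card S - 1) * \<mu>"
      using card unfolding \<mu>_def by simp
    moreover have "0 < card S" using S u card_gt_0_iff by blast
    then have "of_nat (card S) = of_nat (card S - 1) + (1::'a)" by (simp add: of_nat_diff)
    ultimately show ?thesis by (simp add: algebra_simps)
  qed (rule nonzero_residue[OF u])
  then show ?thesis using assms(5,6) by simp
qed

text \<open>Consecutive windows \<open>[iL, iL + L]\<close> share an endpoint, so constancy propagates from \<open>0\<close>.\<close>
lemma eq_zero_by_overlapping_windows: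
  fixes d :: "nat \<Rightarrow> 'a" and L p m :: nat
  assumes d0: "d 0 = z"
    and step: "\<And>i t. i < p \<Longrightarrow> i*L \<le> t \<Longrightarrow> t \<le> i*L + L \<Longrightarrow> t < m \<Longrightarrow> d t = d (i*L)"
    and cover: "m \<le> 1 + p*L"
  shows "k < m \<Longrightarrow> d k = z"
proof (induction k rule: less_induct)
  case (less k)
  show ?case
  proof (cases "k = 0")
    case False
    define i where "i = (k - 1) div L"
    have "0 < L" using False less.prems cover by (cases L) auto
    have lo: "i*L \<le> k - 1" unfolding i_def by (rule div_times_less_eq_dividend)
    have hi: "k - 1 < i*L + L"
      using div_mult_mod_eq[of "k - 1" L] mod_less_divisor[OF \<open>0 < L\<close>, of "k - 1"]
      unfolding i_def by linarith
    have "i*L < p*L" using lo less.prems cover False by linarith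
    then have "i < p" by (simp add: mult_less_cancel2)
    then have "d k = d (i*L)" using step[of i k] lo hi less.prems False by simp
    also have "\<dots> = z" using less.IH[of "i*L"] lo less.prems False by simp
    finally show ?thesis .
  qed (simp add: d0)
qed

section \<open>Structure of the stacked matrix\<close>

definition unvec :: "nat \<Rightarrow> nat \<Rightarrow> complex vec \<Rightarrow> complex mat" where
  "unvec m N w = mat m N (\<lambda>(l,c). w $ (l + c*m))"

lemma unvec_carrier: "unvec m N w \<in> carrier_mat m N"
  by (simp add: unvec_def)

lemma index_lt_mult: "l < m \<Longrightarrow> c < N \<Longrightarrow> l + c*m < m*(N::nat)"
proof -
  assume "l < m" "c < N"
  then have "l + c*m < (c + 1) * m" by simp
  also have "\<dots> \<le> N*m" using \<open>c < N\<close> by (intro mult_le_mono1) simp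
  finally show ?thesis by (simp add: mult.commute)
qed

lemma vecm_carrier: "X \<in> carrier_mat m N \<Longrightarrow> vecm X \<in> carrier_vec (m*N)"
  by (simp add: vecm_def)

lemma index_vecm:
  assumes "X \<in> carrier_mat m N" "l < m" "c < N"
  shows "vecm X $ (l + c*m) = X $$ (l,c)"
  using assms index_lt_mult[OF assms(2,3)] by (simp add: vecm_def)

lemma vecm_zero_mat: "vecm (0\<^sub>m m N) = 0\<^sub>v (m*N)"
proof (rule eq_vecI)
  fix j assume "j < dim_vec (0\<^sub>v (m*N))"
  then have j: "j < m*N" by simp
  then have "0 < m" by (cases m) auto
  moreover have "j div m < N" using j by (simp add: less_mult_imp_div_less mult.commute)
  ultimately show "vecm (0\<^sub>m m N) $ j = 0\<^sub>v (m*N) $ j" using j by (simp add: vecm_def)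
qed (simp add: vecm_def)

lemma vecm_unvec:
  assumes "w \<in> carrier_vec (m*N)"
  shows "vecm (unvec m N w) = w"
proof (rule eq_vecI)
  fix j assume "j < dim_vec w"
  then have j: "j < m*N" using assms by simp
  then have "0 < m" by (cases m) auto
  moreover have "j div m < N" using j by (simp add: less_mult_imp_div_less mult.commute)
  ultimately show "vecm (unvec m N w) $ j = w $ j"
    using j by (simp add: vecm_def unvec_def)
qed (use assms in \<open>simp add: vecm_def unvec_def\<close>)

lemma scalar_prod_row_col:
  assumes "A \<in> carrier_mat n m" "W \<in> carrier_mat m N" "q < n" "c < N"
  shows "row A q \<bullet> col W c = (\<Sum>t<m. A $$ (q,t) * W $$ (t,c))"
  using assms by (simp add: scalar_prod_def atLeast0LessThan)

lemma sum_vecm_index: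
  fixes f :: "nat \<Rightarrow> 'a::comm_monoid_add"
  shows "(\<Sum>j<m*N. f j) = (\<Sum>c<N. \<Sum>l<m. f (l + c*m))"
  using sum_mult_product[of f N m] by (simp add: mult.commute)

lemma stacked_carrier:
  "A \<in> carrier_mat n m \<Longrightarrow> X \<in> carrier_mat m N \<Longrightarrow> stacked A X \<in> carrier_mat (1 + n*(N-1)) (m*N)"
  by (simp add: stacked_def)

text \<open>Row \<open>1 + q(N-1) + r\<close> of the stacked matrix is row \<open>r\<close> of the block \<open>D(row q A, X)\<close>.\<close>
lemma stacked_row_index_cases:
  fixes i n N :: nat
  assumes "0 < i" "i < 1 + n*(N-1)"
  obtains q r where "i = 1 + q*(N-1) + r" "q < n" "r + 1 < N"
proof
  have "i - 1 < n*(N-1)" using assms by (cases i) auto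
  then show "(i - 1) div (N-1) < n" by (simp add: less_mult_imp_div_less)
  show "(i - 1) mod (N-1) + 1 < N" using \<open>i - 1 < n*(N-1)\<close>
    by (metis add.commute less_diff_conv mod_less_divisor mult_0_right neq0_conv not_less0)
  show "i = 1 + (i - 1) div (N-1) * (N-1) + (i - 1) mod (N-1)"
    using assms(1) div_mult_mod_eq[of "i - 1" "N - 1"] by simp
qed

lemma stacked_row_index_bound:
  fixes q r n N :: nat
  assumes "q < n" "r + 1 < N"
  shows "1 + q*(N-1) + r < 1 + n*(N-1)"
proof -
  have "q*(N-1) + r < (q + 1)*(N-1)" using assms(2) by simp
  also have "\<dots> \<le> n*(N-1)" using assms(1) by (intro mult_le_mono1) simp
  finally show ?thesis by simp
qed

lemma Bmat_dims [simp]: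
  "dim_row (Bmat a X) = dim_col X - 1" "dim_col (Bmat a X) = dim_col X"
  by (simp_all add: Bmat_def)

lemma index_stacked_D:
  assumes A: "A \<in> carrier_mat n m" and X: "X \<in> carrier_mat m N"
    and q: "q < n" and r: "r + 1 < N" and l: "l < m" and c: "c < N"
  shows "stacked A X $$ (1 + q*(N-1) + r, l + c*m) = Bmat (row A q) X $$ (r,c) * A $$ (q,l)"
proof -
  let ?a = "row A q"
  have r': "r < N - 1" using r by simp
  have lc: "(l + c*m) div m = c" "(l + c*m) mod m = l" using l by simp_all
  have i: "q*(N-1) + r < n*(N-1)" using stacked_row_index_bound[OF q r] by simp
  have j: "l + c*m < N*m" using index_lt_mult[OF l c] by (simp add: mult.commute)
  have "stacked A X $$ (1 + q*(N-1) + r, l + c*m) = Dmat ?a X $$ (r, l + c*m)"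
    using A X i j r' by (simp add: stacked_def mult.commute)
  also have "\<dots> = Bmat ?a X $$ (r, c) * ?a $ l"
    using A X r' j l by (simp add: Dmat_def kron_def lc)
  also have "?a $ l = A $$ (q,l)" using A q l by simp
  finally show ?thesis .
qed

lemma sum_Bmat_row:
  assumes "dim_col X = N" "r + 1 < N"
  shows "(\<Sum>c<N. Bmat a X $$ (r,c) * g c)
       = (a \<bullet> col X 0) * g (r+1) - (a \<bullet> col X (r+1)) * g 0"
proof -
  have "(\<Sum>c<N. Bmat a X $$ (r,c) * g c)
      = (\<Sum>c<N. (if c = r+1 then (a \<bullet> col X 0) * g (r+1) else 0)
                 - (if c = 0 then (a \<bullet> col X (r+1)) * g 0 else 0))"
    using assms by (intro sum.cong) (auto simp: Bmat_def)
  also have "\<dots> = (a \<bullet> col X 0) * g (r+1) - (a \<bullet> col X (r+1)) * g 0"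
    using assms(2) by (simp add: sum_subtractf)
  finally show ?thesis .
qed

lemma stacked_mult_vecm_D:
  assumes A: "A \<in> carrier_mat n m" and X: "X \<in> carrier_mat m N" and W: "W \<in> carrier_mat m N"
    and q: "q < n" and r: "r + 1 < N"
  shows "(stacked A X *\<^sub>v vecm W) $ (1 + q*(N-1) + r)
       = (row A q \<bullet> col X 0) * (row A q \<bullet> col W (r+1))
         - (row A q \<bullet> col X (r+1)) * (row A q \<bullet> col W 0)"
proof -
  let ?S = "stacked A X" and ?i = "1 + q*(N-1) + r"
  have S: "?S \<in> carrier_mat (1 + n*(N-1)) (m*N)" using A X by (rule stacked_carrier)
  have i: "?i < 1 + n*(N-1)" using q r by (rule stacked_row_index_bound)
  have "(?S *\<^sub>v vecm W) $ ?i = (\<Sum>j<m*N. ?S $$ (?i,j) * vecm W $ j)"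
    using S i vecm_carrier[OF W] by (auto simp: scalar_prod_def atLeast0LessThan intro!: sum.cong)
  also have "\<dots> = (\<Sum>c<N. \<Sum>l<m. ?S $$ (?i, l + c*m) * vecm W $ (l + c*m))"
    by (rule sum_vecm_index)
  also have "\<dots> = (\<Sum>c<N. Bmat (row A q) X $$ (r,c) * (row A q \<bullet> col W c))"
  proof (intro sum.cong refl)
    fix c assume c: "c \<in> {..<N}"
    have "?S $$ (?i, l + c*m) * vecm W $ (l + c*m) = Bmat (row A q) X $$ (r,c) * (A $$ (q,l) * W $$ (l,c))"
      if "l \<in> {..<m}" for l
      using index_stacked_D[OF A X q r, of l c] index_vecm[OF W, of l c] that c by simp
    then show "(\<Sum>l<m. ?S $$ (?i, l + c*m) * vecm W $ (l + c*m))
             = Bmat (row A q) X $$ (r,c) * (row A q \<bullet> col W c)"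
      using c by (simp add: scalar_prod_row_col[OF A W q] sum_distrib_left)
  qed
  also have "\<dots> = (row A q \<bullet> col X 0) * (row A q \<bullet> col W (r+1))
                  - (row A q \<bullet> col X (r+1)) * (row A q \<bullet> col W 0)"
    using X r by (intro sum_Bmat_row) auto
  finally show ?thesis .
qed

lemma stacked_mult_vecm_self:
  assumes A: "A \<in> carrier_mat n m" and X: "X \<in> carrier_mat m N"
    and "0 < i" "i < 1 + n*(N-1)"
  shows "(stacked A X *\<^sub>v vecm X) $ i = 0"
proof -
  obtain q r where "i = 1 + q*(N-1) + r" "q < n" "r + 1 < N"
    using stacked_row_index_cases[OF assms(3,4)] .
  then show ?thesis using stacked_mult_vecm_D[OF A X X] by simp
qed

lemma stacked_mult_vec_0:
  assumes "A \<in> carrier_mat n m" "X \<in> carrier_mat m N"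
  shows "(stacked A X *\<^sub>v v) $ 0 = conjugate (vecm X) \<bullet> v"
proof -
  have "row (stacked A X) 0 = conjugate (vecm X)"
    using assms by (intro eq_vecI) (auto simp: stacked_def vecm_def)
  then show ?thesis using assms by (simp add: stacked_def)
qed

text \<open>The conjugated row \<open>vec(X)\<^sup>*\<close> is replaced by \<open>e\<^sub>0\<^sup>T\<close>: all entries become polynomial in
  \<open>(A, X)\<close>, and the new row still fixes the scale on the line spanned by \<open>vec(X)\<close>.\<close>
definition stacked_pin :: "complex mat \<Rightarrow> complex mat \<Rightarrow> complex mat" where
  "stacked_pin A X = mat (dim_row (stacked A X)) (dim_col (stacked A X))
     (\<lambda>(i,j). if i = 0 then (if j = 0 then 1 else 0) else stacked A X $$ (i,j))"

lemma stacked_pin_carrier: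
  "A \<in> carrier_mat n m \<Longrightarrow> X \<in> carrier_mat m N \<Longrightarrow> stacked_pin A X \<in> carrier_mat (1 + n*(N-1)) (m*N)"
  by (simp add: stacked_pin_def stacked_def)

lemma index_stacked_pin:
  assumes "A \<in> carrier_mat n m" "X \<in> carrier_mat m N" "i < 1 + n*(N-1)" "j < m*N"
  shows "stacked_pin A X $$ (i,j) = (if i = 0 then (if j = 0 then 1 else 0) else stacked A X $$ (i,j))"
  using assms by (simp add: stacked_pin_def stacked_def)

lemma stacked_pin_mult_vec:
  assumes A: "A \<in> carrier_mat n m" and X: "X \<in> carrier_mat m N"
    and v: "v \<in> carrier_vec (m*N)" and i: "i < 1 + n*(N-1)" and C: "0 < m*N"
  shows "(stacked_pin A X *\<^sub>v v) $ i = (if i = 0 then v $ 0 else (stacked A X *\<^sub>v v) $ i)"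
proof -
  have S: "stacked A X \<in> carrier_mat (1 + n*(N-1)) (m*N)" using A X by (rule stacked_carrier)
  have "row (stacked_pin A X) i = (if i = 0 then unit_vec (m*N) 0 else row (stacked A X) i)"
    using S i by (intro eq_vecI) (auto simp: stacked_pin_def unit_vec_def)
  then show ?thesis
    using S i v C by (simp add: stacked_pin_def)
qed

lemma trivial_kernel_stacked_if_pin:
  assumes A: "A \<in> carrier_mat n m" and X: "X \<in> carrier_mat m N"
    and "0 < m" "0 < N" and X00: "X $$ (0,0) \<noteq> 0"
    and ker: "trivial_kernel (stacked_pin A X)"
  shows "trivial_kernel (stacked A X)"
proof (rule trivial_kernelI[OF stacked_carrier[OF A X]])
  let ?S = "stacked A X" and ?R = "1 + n*(N-1)" and ?C = "m*N" and ?x = "vecm X"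
  have S: "?S \<in> carrier_mat ?R ?C" using A X by (rule stacked_carrier)
  have x: "?x \<in> carrier_vec ?C" using X by (rule vecm_carrier)
  have C: "0 < ?C" using assms by simp
  have x0: "?x $ 0 = X $$ (0,0)" using index_vecm[OF X, of 0 0] assms by simp
  fix v assume v: "v \<in> carrier_vec ?C" and Sv: "?S *\<^sub>v v = 0\<^sub>v ?R"
  define y where "y = v $ 0 \<cdot>\<^sub>v ?x - X $$ (0,0) \<cdot>\<^sub>v v"
  have y: "y \<in> carrier_vec ?C" using x v unfolding y_def by simp
  have Sy: "?S *\<^sub>v y = v $ 0 \<cdot>\<^sub>v (?S *\<^sub>v ?x) - X $$ (0,0) \<cdot>\<^sub>v (?S *\<^sub>v v)"
    using S x v unfolding y_def by (simp add: mult_minus_distrib_mat_vec mult_mat_vec)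
  have "stacked_pin A X *\<^sub>v y = 0\<^sub>v ?R"
  proof (rule eq_vecI)
    fix i assume "i < dim_vec (0\<^sub>v ?R)"
    then have i: "i < ?R" by simp
    show "(stacked_pin A X *\<^sub>v y) $ i = 0\<^sub>v ?R $ i"
    proof (cases "i = 0")
      case True
      then show ?thesis using stacked_pin_mult_vec[OF A X y i C] x v C x0 by (simp add: y_def)
    next
      case False
      then show ?thesis
        using stacked_pin_mult_vec[OF A X y i C] stacked_mult_vecm_self[OF A X _ i] S i Sv
        by (simp add: Sy)
    qed
  qed (use A X in \<open>simp add: stacked_pin_def stacked_def\<close>)
  then have "y = 0\<^sub>v ?C" using trivial_kernelD[OF ker stacked_pin_carrier[OF A X] y] by simp
  define \<mu> where "\<mu> = v $ 0 / X $$ (0,0)"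
  have v_eq: "v = \<mu> \<cdot>\<^sub>v ?x"
  proof (rule eq_vecI)
    fix j assume "j < dim_vec (\<mu> \<cdot>\<^sub>v ?x)"
    then have "j < ?C" using x by simp
    moreover have "y $ j = v $ 0 * ?x $ j - X $$ (0,0) * v $ j"
      using \<open>j < ?C\<close> x v unfolding y_def by simp
    ultimately have "v $ 0 * ?x $ j - X $$ (0,0) * v $ j = 0"
      using \<open>y = 0\<^sub>v ?C\<close> by simp
    then show "v $ j = (\<mu> \<cdot>\<^sub>v ?x) $ j"
      using \<open>j < ?C\<close> x X00 by (simp add: \<mu>_def field_simps)
  qed (use v x in simp)
  have "0 = (?S *\<^sub>v v) $ 0" using Sv by simp
  also have "\<dots> = conjugate ?x \<bullet> v" using A X by (rule stacked_mult_vec_0)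
  also have "\<dots> = \<mu> * (?x \<bullet>c ?x)"
    using x by (simp add: v_eq conjugate_vec_sprod_comm[OF x x])
  finally have "\<mu> * (?x \<bullet>c ?x) = 0" by simp
  moreover have "?x \<noteq> 0\<^sub>v ?C"
  proof
    assume "?x = 0\<^sub>v ?C"
    then have "?x $ 0 = 0" using C by simp
    then show False using x0 X00 by simp
  qed
  ultimately have "\<mu> = 0" using x by simp
  then show "v = 0\<^sub>v ?C" unfolding v_eq using x by (intro eq_vecI) auto
qed

section \<open>An explicit injective instance\<close>

lemma stacked_pin_kernel_equations:
  assumes A: "A \<in> carrier_mat n m" and X: "X \<in> carrier_mat m N" and W: "W \<in> carrier_mat m N"
    and "0 < m" "0 < N" and ker: "stacked_pin A X *\<^sub>v vecm W = 0\<^sub>v (1 + n*(N-1))"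
  shows "W $$ (0,0) = 0"
    and "\<And>q c. q < n \<Longrightarrow> 0 < c \<Longrightarrow> c < N \<Longrightarrow>
      (row A q \<bullet> col X 0) * (row A q \<bullet> col W c) = (row A q \<bullet> col X c) * (row A q \<bullet> col W 0)"
proof -
  have w: "vecm W \<in> carrier_vec (m*N)" using W by (rule vecm_carrier)
  have C: "0 < m*N" using assms by simp
  have "W $$ (0,0) = (stacked_pin A X *\<^sub>v vecm W) $ 0"
    using stacked_pin_mult_vec[OF A X w _ C, of 0] index_vecm[OF W, of 0 0] assms by simp
  then show "W $$ (0,0) = 0" using ker by simp
  fix q c assume q: "q < n" and c: "0 < c" "c < N"
  define i where "i = 1 + q*(N-1) + (c-1)"
  have i: "0 < i" "i < 1 + n*(N-1)"
    using stacked_row_index_bound[OF q, of "c-1"] c unfolding i_def by simp_all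
  have "(row A q \<bullet> col X 0) * (row A q \<bullet> col W c) - (row A q \<bullet> col X c) * (row A q \<bullet> col W 0)
      = (stacked A X *\<^sub>v vecm W) $ i"
    using stacked_mult_vecm_D[OF A X W q, of "c-1"] c unfolding i_def by simp
  also have "\<dots> = (stacked_pin A X *\<^sub>v vecm W) $ i"
    using stacked_pin_mult_vec[OF A X w i(2) C] i by simp
  also have "\<dots> = 0" using ker i by simp
  finally show "(row A q \<bullet> col X 0) * (row A q \<bullet> col W c) = (row A q \<bullet> col X c) * (row A q \<bullet> col W 0)"
    by simp
qed

definition window :: "nat \<Rightarrow> nat \<Rightarrow> nat \<Rightarrow> nat set" where
  "window m N i = {t. t < m \<and> i*(N-1) \<le> t \<and> t \<le> i*(N-1) + (N-1)}"

text \<open>The witness: in the first \<open>m\<close> rows \<open>A\<close> is the identity, which forces a kernel vector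
  \<open>W\<close> to satisfy \<open>W\<^sub>k\<^sub>c = [k mod N = c] W\<^sub>k\<^sub>0\<close> for \<open>c > 0\<close>; each further row is the indicator of a window of
  \<open>N\<close> consecutive indices, on which the residues mod \<open>N\<close> are distinct, and forces \<open>W\<^sub>k\<^sub>0\<close> to be
  constant on that window.  The \<open>n - m\<close> windows cover all \<open>m\<close> indices when
  \<open>m \<le> 1 + (n - m)(N - 1)\<close>, which follows from \<open>(n-1)/(n-m) \<le> N\<close>.\<close>

definition wit_X :: "nat \<Rightarrow> nat \<Rightarrow> complex mat" where
  "wit_X m N = mat m N (\<lambda>(t,c). if c = 0 \<or> t mod N = c then 1 else 0)"

definition wit_A :: "nat \<Rightarrow> nat \<Rightarrow> nat \<Rightarrow> complex mat" where
  "wit_A n m N = mat n m (\<lambda>(q,t). if q < m then (if t = q then 1 else 0)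
                                  else if t \<in> window m N (q - m) then 1 else 0)"

lemma index_wit_X:
  "t < m \<Longrightarrow> c < N \<Longrightarrow> wit_X m N $$ (t,c) = (if c = 0 \<or> t mod N = c then 1 else 0)"
  by (simp add: wit_X_def)

lemma wit_carrier: "wit_X m N \<in> carrier_mat m N" "wit_A n m N \<in> carrier_mat n m"
  by (simp_all add: wit_X_def wit_A_def)

lemma window_subset: "window m N i \<subseteq> {..<m}"
  by (auto simp: window_def)

lemma finite_window: "finite (window m N i)"
  by (rule finite_subset[OF window_subset]) simp

lemma inj_on_mod_window: "0 < N \<Longrightarrow> inj_on (\<lambda>t. t mod N) (window m N i)"
  by (rule inj_on_subset[OF inj_on_mod_interval[of N "i*(N-1)"]]) (auto simp: window_def)

lemma row_wit_A_unit:
  assumes "k < m" "m < n" "W \<in> carrier_mat m N" "c < N"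
  shows "row (wit_A n m N) k \<bullet> col W c = W $$ (k,c)"
proof -
  have "row (wit_A n m N) k \<bullet> col W c = (\<Sum>t<m. wit_A n m N $$ (k,t) * W $$ (t,c))"
    by (rule scalar_prod_row_col[OF wit_carrier(2) assms(3)]) (use assms in auto)
  also have "\<dots> = (\<Sum>t<m. if t = k then W $$ (t,c) else 0)"
    using assms by (intro sum.cong) (auto simp: wit_A_def)
  finally show ?thesis using assms(1) by simp
qed

lemma row_wit_A_window:
  assumes "m \<le> q" "q < n" "W \<in> carrier_mat m N" "c < N"
  shows "row (wit_A n m N) q \<bullet> col W c = (\<Sum>t\<in>window m N (q - m). W $$ (t,c))"
proof -
  have "row (wit_A n m N) q \<bullet> col W c = (\<Sum>t<m. wit_A n m N $$ (q,t) * W $$ (t,c))"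
    by (rule scalar_prod_row_col[OF wit_carrier(2) assms(3)]) (use assms in auto)
  also have "\<dots> = (\<Sum>t<m. if t \<in> window m N (q - m) then W $$ (t,c) else 0)"
    using assms by (intro sum.cong) (auto simp: wit_A_def)
  also have "\<dots> = (\<Sum>t\<in>{..<m} \<inter> window m N (q - m). W $$ (t,c))"
    by (simp add: sum.inter_restrict)
  also have "{..<m} \<inter> window m N (q - m) = window m N (q - m)"
    using window_subset by blast
  finally show ?thesis .
qed

lemma wit_kernel_unit_row:
  assumes "k < m" "m < n" "0 < c" "c < N" and W: "W \<in> carrier_mat m N"
    and eq: "(row (wit_A n m N) k \<bullet> col (wit_X m N) 0) * (row (wit_A n m N) k \<bullet> col W c)
           = (row (wit_A n m N) k \<bullet> col (wit_X m N) c) * (row (wit_A n m N) k \<bullet> col W 0)"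
  shows "W $$ (k,c) = (if k mod N = c then W $$ (k,0) else 0)"
  using eq assms
  by (simp add: row_wit_A_unit[OF _ _ wit_carrier(1)] row_wit_A_unit[OF _ _ W] index_wit_X)

lemma wit_kernel_window_const:
  assumes "i < n - m" "0 < N" and W: "W \<in> carrier_mat m N"
    and unit_rows: "\<And>k c. k < m \<Longrightarrow> 0 < c \<Longrightarrow> c < N \<Longrightarrow>
      W $$ (k,c) = (if k mod N = c then W $$ (k,0) else 0)"
    and eq: "\<And>c. 0 < c \<Longrightarrow> c < N \<Longrightarrow>
      (row (wit_A n m N) (m + i) \<bullet> col (wit_X m N) 0) * (row (wit_A n m N) (m + i) \<bullet> col W c)
        = (row (wit_A n m N) (m + i) \<bullet> col (wit_X m N) c) * (row (wit_A n m N) (m + i) \<bullet> col W 0)"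
    and t: "t \<in> window m N i" "t' \<in> window m N i"
  shows "W $$ (t,0) = W $$ (t',0)"
proof (rule eq_on_residue_transversal[OF finite_window inj_on_mod_window[OF assms(2)] assms(2) _ t])
  fix c assume c: "0 < c" "c < N"
  let ?S = "window m N i" and ?a = "row (wit_A n m N) (m + i)"
  have q: "m \<le> m + i" "m + i < n" "m + i - m = i" using assms(1) by auto
  have S: "t < m" if "t \<in> ?S" for t using that window_subset by auto
  have "?a \<bullet> col (wit_X m N) 0 = of_nat (card ?S)"
    using row_wit_A_window[OF q(1,2) wit_carrier(1), of 0] S assms(2) by (simp add: index_wit_X)
  moreover have "?a \<bullet> col (wit_X m N) c = (\<Sum>t\<in>?S. if t mod N = c then 1 else 0)"
    using row_wit_A_window[OF q(1,2) wit_carrier(1), of c] S c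
    by (simp add: index_wit_X cong: sum.cong)
  moreover have "?a \<bullet> col W 0 = (\<Sum>t\<in>?S. W $$ (t,0))"
    using row_wit_A_window[OF q(1,2) W, of 0] assms(2) by simp
  moreover have "?a \<bullet> col W c = (\<Sum>t\<in>?S. if t mod N = c then W $$ (t,0) else 0)"
    using row_wit_A_window[OF q(1,2) W, of c] S c by (simp add: unit_rows cong: sum.cong)
  ultimately show "of_nat (card ?S) * (\<Sum>t\<in>?S. if t mod N = c then W $$ (t,0) else 0)
      = (\<Sum>t\<in>?S. if t mod N = c then 1 else 0) * (\<Sum>t\<in>?S. W $$ (t,0))"
    using eq[OF c] by simp
qed

lemma trivial_kernel_stacked_pin_witness:
  assumes "0 < m" "m < n" "0 < N" and cover: "m \<le> 1 + (n - m)*(N - 1)"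
  shows "trivial_kernel (stacked_pin (wit_A n m N) (wit_X m N))"
proof (rule trivial_kernelI[OF stacked_pin_carrier[OF wit_carrier(2,1)]])
  fix v assume v: "v \<in> carrier_vec (m*N)"
    and ker: "stacked_pin (wit_A n m N) (wit_X m N) *\<^sub>v v = 0\<^sub>v (1 + n*(N-1))"
  define W where "W = unvec m N v"
  have W: "W \<in> carrier_mat m N" unfolding W_def by (rule unvec_carrier)
  have v_eq: "v = vecm W" unfolding W_def using v by (simp add: vecm_unvec)
  note eqs = stacked_pin_kernel_equations[OF wit_carrier(2,1) W assms(1,3) ker[unfolded v_eq]]
  have unit_rows: "W $$ (k,c) = (if k mod N = c then W $$ (k,0) else 0)"
    if "k < m" "0 < c" "c < N" for k c
    using that assms(2) W eqs(2)[of k c] by (intro wit_kernel_unit_row) auto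
  have first_col_zero: "W $$ (k,0) = 0" if "k < m" for k
  proof (rule eq_zero_by_overlapping_windows[OF _ _ cover that])
    show "W $$ (0,0) = 0" by (rule eqs(1))
    fix i t assume "i < n - m" "i * (N-1) \<le> t" "t \<le> i * (N-1) + (N-1)" "t < m"
    then show "W $$ (t,0) = W $$ (i * (N-1), 0)"
      using W unit_rows eqs(2)[of "m + i"] assms(3)
      by (intro wit_kernel_window_const[where n = n]) (auto simp: window_def)
  qed
  have "W $$ (k,c) = 0" if "k < m" "c < N" for k c
    using that first_col_zero[of k] unit_rows[of k c] by (cases "c = 0") simp_all
  then have "W = 0\<^sub>m m N" using W by (intro eq_matI) auto
  then show "v = 0\<^sub>v (m*N)" unfolding v_eq by (simp add: vecm_zero_mat)
qed

section \<open>Generic full rank\<close>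

lemma A_of_carrier: "A_of n m z \<in> carrier_mat n m"
  by (simp add: A_of_def)

lemma X0_of_carrier: "X0_of m N z \<in> carrier_mat m N"
  by (simp add: X0_of_def)

lemma A_of_X0_of_local:
  assumes "\<And>p. p \<in> param_idx n m N \<Longrightarrow> z p = z' p"
  shows "A_of n m z = A_of n m z'" "X0_of m N z = X0_of m N z'"
  using assms by (auto simp: A_of_def X0_of_def param_idx_def intro!: eq_matI)

lemma polyfun_row_A_of_col_X0_of:
  assumes "q < n" "c < N"
  shows "polyfun (\<lambda>z. row (A_of n m z) q \<bullet> col (X0_of m N z) c)"
proof -
  have "row (A_of n m z) q \<bullet> col (X0_of m N z) c = (\<Sum>t<m. z (Inr (q,t)) * z (Inl (t,c)))" for z
    using scalar_prod_row_col[OF A_of_carrier X0_of_carrier assms] assms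
    by (simp add: A_of_def X0_of_def)
  then show ?thesis by (simp add: polyfun_sum polyfun_mult polyfun_var)
qed

lemma polyfun_stacked_pin_entry:
  assumes "0 < m" and i: "i < 1 + n*(N-1)" and j: "j < m*N"
  shows "polyfun (\<lambda>z. stacked_pin (A_of n m z) (X0_of m N z) $$ (i,j))"
proof (cases "i = 0")
  case True
  then show ?thesis
    using index_stacked_pin[OF A_of_carrier X0_of_carrier i j] by (simp add: polyfun_const)
next
  case False
  then obtain q r where qr: "i = 1 + q*(N-1) + r" "q < n" "r + 1 < N"
    using stacked_row_index_cases[OF _ i] by blast
  define l c where "l = j mod m" and "c = j div m"
  have l: "l < m" using assms(1) unfolding l_def by simp
  have c: "c < N" using j unfolding c_def by (simp add: less_mult_imp_div_less mult.commute)
  have j_eq: "j = l + c*m" unfolding l_def c_def by simp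
  let ?sp = "\<lambda>z c'. row (A_of n m z) q \<bullet> col (X0_of m N z) c'"
  have "stacked_pin (A_of n m z) (X0_of m N z) $$ (i,j)
      = (if c = 0 then - ?sp z (r+1) else if c = r + 1 then ?sp z 0 else 0) * z (Inr (q,l))" for z
    using index_stacked_pin[OF A_of_carrier X0_of_carrier i j] False
      index_stacked_D[OF A_of_carrier X0_of_carrier qr(2,3) l c] qr(2,3) c l
    unfolding qr(1) j_eq by (simp add: Bmat_def A_of_def X0_of_def)
  then show ?thesis
    using qr(2,3)
    by (simp add: polyfun_mult polyfun_if polyfun_uminus polyfun_const polyfun_var
        polyfun_row_A_of_col_X0_of)
qed

lemma polyfun_det_mult_stacked_pin:
  assumes "0 < m" and K: "K \<in> carrier_mat (m*N) (1 + n*(N-1))"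
  shows "polyfun (\<lambda>z. det (K * stacked_pin (A_of n m z) (X0_of m N z)))"
proof (rule polyfun_det)
  let ?R = "1 + n*(N-1)" and ?P = "\<lambda>z. stacked_pin (A_of n m z) (X0_of m N z)"
  have P: "?P z \<in> carrier_mat ?R (m*N)" for z
    by (rule stacked_pin_carrier[OF A_of_carrier X0_of_carrier])
  show "K * ?P z \<in> carrier_mat (m*N) (m*N)" for z using K P by (rule mult_carrier_mat)
  fix i j assume ij: "i < m*N" "j < m*N"
  have "(\<lambda>z. (K * ?P z) $$ (i,j)) = (\<lambda>z. \<Sum>k\<in>{0..<?R}. K $$ (i,k) * ?P z $$ (k,j))"
  proof
    fix z
    have "(K * ?P z) $$ (i,j) = row K i \<bullet> col (?P z) j" using K P[of z] ij by simp
    also have "\<dots> = (\<Sum>k\<in>{0..<?R}. K $$ (i,k) * ?P z $$ (k,j))"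
      unfolding scalar_prod_def using K P[of z] ij by (intro sum.cong) auto
    finally show "(K * ?P z) $$ (i,j) = (\<Sum>k\<in>{0..<?R}. K $$ (i,k) * ?P z $$ (k,j))" .
  qed
  then show "polyfun (\<lambda>z. (K * ?P z) $$ (i,j))"
    using ij assms(1)
    by (simp only:) (intro polyfun_sum polyfun_mult[OF polyfun_const] polyfun_stacked_pin_entry; simp)
qed

lemma AE_trivial_kernel_stacked_pin:
  assumes "0 < m" "m < n" "0 < N" "m \<le> 1 + (n - m)*(N - 1)"
  shows "AE z in PiM (param_idx n m N) (\<lambda>_. lborel).
           trivial_kernel (stacked_pin (A_of n m z) (X0_of m N z))"
proof -
  let ?P = "\<lambda>z. stacked_pin (A_of n m z) (X0_of m N z)"
  let ?W = "stacked_pin (wit_A n m N) (wit_X m N)"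
  let ?K = "transpose_mat (map_mat conjugate ?W)"
  have P: "?P z \<in> carrier_mat (1 + n*(N-1)) (m*N)" for z
    by (rule stacked_pin_carrier[OF A_of_carrier X0_of_carrier])
  have W: "?W \<in> carrier_mat (1 + n*(N-1)) (m*N)" by (rule stacked_pin_carrier[OF wit_carrier(2,1)])
  then have K: "?K \<in> carrier_mat (m*N) (1 + n*(N-1))" by simp
  define f where "f z = det (?K * ?P z)" for z
  define w where
    "w = (\<lambda>p. case p of Inl (t,c) \<Rightarrow> wit_X m N $$ (t,c) | Inr (q,t) \<Rightarrow> wit_A n m N $$ (q,t))"
  have "A_of n m w = wit_A n m N" "X0_of m N w = wit_X m N"
    unfolding w_def by (auto simp: A_of_def X0_of_def wit_A_def wit_X_def intro!: eq_matI)
  then have f_w: "f w \<noteq> 0"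
    using det_gram_nonzero_if_trivial_kernel[OF W trivial_kernel_stacked_pin_witness[OF assms]]
    by (simp add: f_def)
  have "finite (param_idx n m N)" by (simp add: param_idx_def)
  moreover have "polyfun f" unfolding f_def using assms(1) K by (rule polyfun_det_mult_stacked_pin)
  moreover have "f z = f z'" if "\<And>p. p \<in> param_idx n m N \<Longrightarrow> z p = z' p" for z z'
    using A_of_X0_of_local[OF that] by (simp add: f_def)
  ultimately have "AE z in PiM (param_idx n m N) (\<lambda>_. lborel). f z \<noteq> 0"
    using f_w by (rule AE_polyfun_nonzero)
  then show ?thesis
  proof (rule eventually_mono)
    fix z assume "f z \<noteq> 0"
    then show "trivial_kernel (?P z)"
      unfolding f_def by (rule trivial_kernel_if_det_mult_nonzero[OF K P])
  qed
qed

lemma cover_of_ratio_bound: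
  fixes n m N :: nat
  assumes "m < n" "0 < N" "real (n - 1) / real (n - m) \<le> real N"
  shows "m \<le> 1 + (n - m)*(N - 1)"
proof -
  have "real (n - 1) \<le> real (N * (n - m))"
    using assms by (simp add: pos_divide_le_eq)
  then have "n - 1 \<le> N * (n - m)" by (simp only: of_nat_le_iff)
  moreover have "N * (n - m) = (n - m)*(N - 1) + (n - m)" using assms(2) by (cases N) simp_all
  ultimately show ?thesis using assms(1) by linarith
qed

theorem claim1:
  fixes n m N :: nat
  assumes "0 < n" "0 < m" "0 < N" "m < n"
    and "real (n - 1) / real (n - m) \<le> real N" "N \<le> m"
  shows "AE z in PiM (param_idx n m N) (\<lambda>_. lborel).
           vec_space.rank (1 + n * (N - 1)) (stacked (A_of n m z) (X0_of m N z)) = m * N"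
proof -
  have cover: "m \<le> 1 + (n - m)*(N - 1)" by (rule cover_of_ratio_bound[OF assms(4,3,5)])
  have "AE z in PiM (param_idx n m N) (\<lambda>_. lborel). (z (Inl (0,0)) :: complex) \<noteq> 0"
    by (rule AE_polyfun_nonzero[of "param_idx n m N" "\<lambda>z. z (Inl (0,0))" "\<lambda>_. 1"])
      (use assms in \<open>auto simp: param_idx_def intro: polyfun_var\<close>)
  with AE_trivial_kernel_stacked_pin[OF assms(2,4,3) cover]
  show ?thesis
  proof eventually_elim
    case (elim z)
    have "X0_of m N z $$ (0,0) \<noteq> 0" using elim(2) assms by (simp add: X0_of_def)
    then have "trivial_kernel (stacked (A_of n m z) (X0_of m N z))"
      using trivial_kernel_stacked_if_pin[OF A_of_carrier X0_of_carrier] elim(1) assms by blast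
    then show ?case
      by (rule rank_eq_dim_col_if_trivial_kernel[OF stacked_carrier[OF A_of_carrier X0_of_carrier]])
  qed
qed

end
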